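(* Let $\langle S,L,\tau,\ell\rangle$ be a labelled Markov chain. Robust bisimilarity $\simeq$ is a probabilistic bisimulation; in particular it is an equivalence relation, and hence $\simeq\,\subseteq\,\sim$.
   Context: Labelled Markov chain $\langle S,L,\tau,\ell\rangle$: finite state set $S$, finite label set $L$, $\tau:S\to\mathcal{D}(S)$, $\ell:S\to L$, with $|\ell(S)|\ge2$. $\Omega(\mu,\nu)$ = couplings of $\mu,\nu$ (distributions on $S\times S$ with marginals $\mu,\nu$). A probabilistic bisimulation is an equivalence relation $R\subseteq S\times S$ such that for all $(s,t)\in R$, $\ell(s)=\ell(t)$ and there is $\omega\in\Omega(\tau(s),\tau(t))$ with $\mathrm{support}(\omega)\subseteq R$; $s\sim t$ iff $(s,t)\in R$ for some bisimulation $R$. Let $S^2_\Delta=\{(s,s)\}$, $S^2_1=\{(s,t)\mid\ell(s)\ne\ell(t)\}$, $S^2_{0?}=(S\times S)\setminus(S^2_\Delta\cup S^2_1)$. A policy is $P:S\times S\to\mathcal{D}(S\times S)$ with $P(s,t)\in\Omega(\tau(s),\tau(t))$ for $(s,t)\notin S^2_1$ and $P(s,t)$ the point mass at $(s,t)$ for $(s,t)\in S^2_1$; $\mathcal{P}$ is the set of policies and each $P$ induces a Markov chain $\langle S\times S,P\rangle$. Robust bisimilarity: $s\simeq t$ iff there is $P\in\mathcal{P}$ such that $(s,t)$ reaches $S^2_\Delta$ with probability $1$ in $\langle S\times S,P\rangle$. *)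

theory Defs
  imports "HOL-Probability.Probability"
begin

definition couplings :: "'s pmf \<Rightarrow> 's pmf \<Rightarrow> ('s \<times> 's) pmf set" where
  "couplings \<mu> \<nu> = {\<omega>. map_pmf fst \<omega> = \<mu> \<and> map_pmf snd \<omega> = \<nu>}"

definition prob_bisimulation ::
  "('s \<Rightarrow> 's pmf) \<Rightarrow> ('s \<Rightarrow> 'l) \<Rightarrow> ('s \<times> 's) set \<Rightarrow> bool" where
  "prob_bisimulation \<tau> lab R \<longleftrightarrow> equiv UNIV R \<and>
     (\<forall>(s,t)\<in>R. lab s = lab t \<and> (\<exists>\<omega>\<in>couplings (\<tau> s) (\<tau> t). set_pmf \<omega> \<subseteq> R))"

definition bisimilar :: "('s \<Rightarrow> 's pmf) \<Rightarrow> ('s \<Rightarrow> 'l) \<Rightarrow> 's \<Rightarrow> 's \<Rightarrow> bool" where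
  "bisimilar \<tau> lab s t \<longleftrightarrow> (\<exists>R. prob_bisimulation \<tau> lab R \<and> (s,t) \<in> R)"

definition diag_pairs :: "('s \<times> 's) set" where
  "diag_pairs = {(s,s) | s. True}"

definition diff_label_pairs :: "('s \<Rightarrow> 'l) \<Rightarrow> ('s \<times> 's) set" where
  "diff_label_pairs lab = {(s,t). lab s \<noteq> lab t}"

definition is_policy ::
  "('s \<Rightarrow> 's pmf) \<Rightarrow> ('s \<Rightarrow> 'l) \<Rightarrow> ('s \<times> 's \<Rightarrow> ('s \<times> 's) pmf) \<Rightarrow> bool" where
  "is_policy \<tau> lab P \<longleftrightarrow>
     (\<forall>s t. (s,t) \<notin> diff_label_pairs lab \<longrightarrow> P (s,t) \<in> couplings (\<tau> s) (\<tau> t)) \<and>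
     (\<forall>s t. (s,t) \<in> diff_label_pairs lab \<longrightarrow> P (s,t) = return_pmf (s,t))"

fun reach_within :: "('a::finite \<Rightarrow> 'a pmf) \<Rightarrow> 'a set \<Rightarrow> nat \<Rightarrow> 'a \<Rightarrow> real" where
  "reach_within M T 0 u = (if u \<in> T then 1 else 0)"
| "reach_within M T (Suc n) u =
     (if u \<in> T then 1 else (\<Sum>v\<in>UNIV. pmf (M u) v * reach_within M T n v))"

definition reaches_as :: "('a::finite \<Rightarrow> 'a pmf) \<Rightarrow> 'a set \<Rightarrow> 'a \<Rightarrow> bool" where
  "reaches_as M T u \<longleftrightarrow> (\<lambda>n. reach_within M T n u) \<longlonglongrightarrow> 1"

definition robust_bisimilar ::
  "('s::finite \<Rightarrow> 's pmf) \<Rightarrow> ('s \<Rightarrow> 'l) \<Rightarrow> 's \<Rightarrow> 's \<Rightarrow> bool" where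
  "robust_bisimilar \<tau> lab s t \<longleftrightarrow>
     (\<exists>P. is_policy \<tau> lab P \<and> reaches_as P diag_pairs (s,t))"

end

theory Submission
  imports Defs
begin

text \<open>Robust bisimilarity is characterised by ranking certificates: a relation X with a
  rank function such that every off-diagonal pair of X admits a coupling of its successor
  distributions that stays inside X and puts positive mass on a pair of strictly smaller
  rank. Following these couplings, every pair of X reaches the diagonal with positive
  probability within a bounded number of steps, hence almost surely. Conversely,
  robust bisimilarity itself is certified by the least number of steps in which an almost
  surely successful policy hits the diagonal with positive probability. Certificates are
  closed under converse and, with a lexicographic rank, under relational composition; this
  gives symmetry and transitivity, and the certificate couplings show that robust
  bisimilarity is a probabilistic bisimulation.\<close>

lemma reach_within_target: "u \<in> T \<Longrightarrow> reach_within M T n u = 1"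
  by (cases n) auto

lemma reach_within_bounds: "0 \<le> reach_within M T n u \<and> reach_within M T n u \<le> 1"
proof (induction n arbitrary: u)
  case (Suc n)
  have "(\<Sum>v\<in>UNIV. pmf (M u) v * reach_within M T n v) \<le> (\<Sum>v\<in>UNIV. pmf (M u) v)"
    by (intro sum_mono) (simp add: Suc.IH mult_left_le)
  moreover have "0 \<le> (\<Sum>v\<in>UNIV. pmf (M u) v * reach_within M T n v)"
    by (intro sum_nonneg) (simp add: Suc.IH)
  ultimately show ?case
    using sum_pmf_eq_1[of UNIV "M u"] by simp
qed simp

lemma one_minus_reach_within_Suc:
  assumes "u \<notin> T"
  shows "1 - reach_within M T (Suc n) u = (\<Sum>v\<in>UNIV. pmf (M u) v * (1 - reach_within M T n v))"
  using assms sum_pmf_eq_1[of UNIV "M u"] by (simp add: algebra_simps sum_subtractf)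

lemma reach_within_mono:
  assumes "n \<le> m"
  shows "reach_within M T n u \<le> reach_within M T m u"
proof -
  have "reach_within M T n u \<le> reach_within M T (Suc n) u" for n u
  proof (induction n arbitrary: u)
    case 0
    then show ?case
      using reach_within_bounds[of M T "Suc 0" u] by auto
  next
    case (Suc n)
    then show ?case
      by (auto intro!: sum_mono mult_left_mono simp del: reach_within.simps(1))
  qed
  then show ?thesis
    using lift_Suc_mono_le[of "\<lambda>n. reach_within M T n u"] assms by blast
qed

lemma reaches_asI:
  assumes "\<And>n. 1 - reach_within M T n u \<le> f n" and "f \<longlonglongrightarrow> 0"
  shows "reaches_as M T u"
proof -
  have "(\<lambda>n. 1 - reach_within M T n u) \<longlonglongrightarrow> 0"
    using assms by (intro tendsto_sandwich[OF _ _ tendsto_const assms(2)])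
      (auto simp: reach_within_bounds)
  from tendsto_diff[OF tendsto_const this, of 1] show ?thesis
    unfolding reaches_as_def by simp
qed

lemma one_minus_reach_within_add_le:
  assumes closed: "\<And>y. y \<in> X \<Longrightarrow> y \<notin> T \<Longrightarrow> set_pmf (M y) \<subseteq> X"
    and bound: "\<And>y. y \<in> X \<Longrightarrow> 1 - reach_within M T m y \<le> c" and "x \<in> X"
  shows "1 - reach_within M T (n + m) x \<le> (1 - reach_within M T n x) * c"
  using \<open>x \<in> X\<close>
proof (induction n arbitrary: x)
  case 0
  then show ?case
    using bound by (cases "x \<in> T") (auto simp: reach_within_target)
next
  case (Suc n)
  show ?case
  proof (cases "x \<in> T")
    case False
    have "1 - reach_within M T (Suc n + m) x
        = (\<Sum>v\<in>UNIV. pmf (M x) v * (1 - reach_within M T (n + m) v))"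
      using one_minus_reach_within_Suc[OF False] by simp
    also have "\<dots> \<le> (\<Sum>v\<in>UNIV. pmf (M x) v * ((1 - reach_within M T n v) * c))"
    proof (intro sum_mono)
      fix v
      show "pmf (M x) v * (1 - reach_within M T (n + m) v)
          \<le> pmf (M x) v * ((1 - reach_within M T n v) * c)"
      proof (cases "v \<in> set_pmf (M x)")
        case True
        then have "v \<in> X" using closed[OF Suc.prems False] by blast
        then show ?thesis using Suc.IH by (intro mult_left_mono) auto
      qed (simp add: set_pmf_iff)
    qed
    also have "\<dots> = (1 - reach_within M T (Suc n) x) * c"
      using one_minus_reach_within_Suc[OF False, of M n] by (simp add: sum_distrib_right mult.assoc)
    finally show ?thesis .
  qed (simp add: reach_within_target)
qed

text \<open>Every N steps the probability of not having hit T shrinks by the factor c < 1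
  defined in the proof.\<close>
lemma reaches_as_if_uniformly_positive:
  fixes M :: "'a::finite \<Rightarrow> 'a pmf"
  assumes closed: "\<And>y. y \<in> X \<Longrightarrow> y \<notin> T \<Longrightarrow> set_pmf (M y) \<subseteq> X"
    and pos: "\<And>y. y \<in> X \<Longrightarrow> 0 < reach_within M T N y" and x: "x \<in> X"
  shows "reaches_as M T x"
proof (cases "x \<in> T")
  case True
  then show ?thesis
    by (intro reaches_asI[where f = "\<lambda>_. 0"]) (auto simp: reach_within_target)
next
  case False
  with pos[OF x] have "N > 0"
    by (cases N) auto
  define c where "c = Max ((\<lambda>y. 1 - reach_within M T N y) ` X)"
  have c_bound: "1 - reach_within M T N y \<le> c" if "y \<in> X" for y
    unfolding c_def using that by (intro Max_ge) auto
  have "c \<in> (\<lambda>y. 1 - reach_within M T N y) ` X"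
    unfolding c_def using x by (intro Max_in) auto
  then have "c < 1"
    using pos by auto
  have "0 \<le> c"
    using c_bound[OF x] reach_within_bounds[of M T N x] by linarith
  have geometric: "1 - reach_within M T (k * N) x \<le> c ^ k" for k
  proof (induction k)
    case (Suc k)
    have "1 - reach_within M T (k * N + N) x \<le> (1 - reach_within M T (k * N) x) * c"
      by (rule one_minus_reach_within_add_le[OF closed c_bound x])
    also have "\<dots> \<le> c ^ k * c"
      using Suc.IH \<open>0 \<le> c\<close> by (intro mult_right_mono)
    finally show ?case
      by (simp add: add.commute mult.commute)
  qed simp
  show ?thesis
  proof (rule reaches_asI)
    fix n
    have "reach_within M T (n div N * N) x \<le> reach_within M T n x"
      by (intro reach_within_mono) simp
    then show "1 - reach_within M T n x \<le> c ^ (n div N)"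
      using geometric[of "n div N"] by linarith
  next
    have "norm c < 1"
      using \<open>0 \<le> c\<close> \<open>c < 1\<close> by simp
    from filterlim_compose[OF LIMSEQ_power_zero[OF this] filterlim_at_top_div_const_nat[OF \<open>N > 0\<close>]]
    show "(\<lambda>n. c ^ (n div N)) \<longlonglongrightarrow> 0"
      by (simp add: o_def)
  qed
qed

lemma reach_within_pos_if_rank_le:
  fixes M :: "'a::finite \<Rightarrow> 'a pmf" and rank :: "'a \<Rightarrow> nat"
  assumes closed: "\<And>y. y \<in> X \<Longrightarrow> y \<notin> T \<Longrightarrow> set_pmf (M y) \<subseteq> X"
    and decreasing: "\<And>y. y \<in> X \<Longrightarrow> y \<notin> T \<Longrightarrow> \<exists>v\<in>set_pmf (M y). rank v < rank y"
    and "x \<in> X" "rank x \<le> k"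
  shows "0 < reach_within M T k x"
  using assms(3,4)
proof (induction k arbitrary: x)
  case 0
  then show ?case
    using decreasing[of x] by (fastforce simp: reach_within_target)
next
  case (Suc k)
  show ?case
  proof (cases "x \<in> T")
    case False
    obtain v where v: "v \<in> set_pmf (M x)" "rank v < rank x"
      using decreasing[OF Suc.prems(1) False] by blast
    have "0 < pmf (M x) v * reach_within M T k v"
      using v closed[OF Suc.prems(1) False] Suc.IH[of v] Suc.prems(2)
      by (auto simp: pmf_positive)
    also have "\<dots> \<le> (\<Sum>w\<in>UNIV. pmf (M x) w * reach_within M T k w)"
      by (rule member_le_sum) (auto simp: reach_within_bounds)
    finally show ?thesis
      using False by simp
  qed (simp add: reach_within_target)
qed

lemma reaches_as_if_rank_decreases:
  fixes M :: "'a::finite \<Rightarrow> 'a pmf" and rank :: "'a \<Rightarrow> nat"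
  assumes closed: "\<And>y. y \<in> X \<Longrightarrow> y \<notin> T \<Longrightarrow> set_pmf (M y) \<subseteq> X"
    and decreasing: "\<And>y. y \<in> X \<Longrightarrow> y \<notin> T \<Longrightarrow> \<exists>v\<in>set_pmf (M y). rank v < rank y"
    and "x \<in> X"
  shows "reaches_as M T x"
proof (rule reaches_as_if_uniformly_positive[OF closed _ \<open>x \<in> X\<close>])
  fix y
  assume "y \<in> X"
  then show "0 < reach_within M T (Max (rank ` X)) y"
    by (intro reach_within_pos_if_rank_le[OF closed decreasing]) auto
qed

lemma reaches_as_successor:
  fixes M :: "'a::finite \<Rightarrow> 'a pmf"
  assumes reach: "reaches_as M T x" and "x \<notin> T" and v: "v \<in> set_pmf (M x)"
  shows "reaches_as M T v"
proof (rule reaches_asI)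
  define p where "p = pmf (M x) v"
  have "0 < p"
    using v by (simp add: p_def pmf_positive)
  fix n
  have "p * (1 - reach_within M T n v) \<le> (\<Sum>w\<in>UNIV. pmf (M x) w * (1 - reach_within M T n w))"
    unfolding p_def by (rule member_le_sum) (auto simp: reach_within_bounds)
  also have "\<dots> = 1 - reach_within M T (Suc n) x"
    using one_minus_reach_within_Suc[OF \<open>x \<notin> T\<close>] by simp
  finally show "1 - reach_within M T n v \<le> (1 - reach_within M T (Suc n) x) / pmf (M x) v"
    using \<open>0 < p\<close> by (simp add: p_def field_simps)
next
  have "(\<lambda>n. reach_within M T (Suc n) x) \<longlonglongrightarrow> 1"
    using reach unfolding reaches_as_def by (rule LIMSEQ_Suc)
  then have "(\<lambda>n. (1 - reach_within M T (Suc n) x) / pmf (M x) v) \<longlonglongrightarrow> (1 - 1) / pmf (M x) v"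
    using v by (intro tendsto_divide tendsto_diff tendsto_const) (auto simp: set_pmf_iff)
  then show "(\<lambda>n. (1 - reach_within M T (Suc n) x) / pmf (M x) v) \<longlonglongrightarrow> 0"
    by simp
qed

lemma ex_successor_reach_within_pos:
  assumes "u \<notin> T" and "0 < reach_within M T (Suc m) u"
  shows "\<exists>v\<in>set_pmf (M u). 0 < reach_within M T m v"
proof (rule ccontr)
  assume "\<not> ?thesis"
  then have "reach_within M T m v = 0" if "v \<in> set_pmf (M u)" for v
    using that reach_within_bounds[of M T m v] by auto
  then have "(\<Sum>v\<in>UNIV. pmf (M u) v * reach_within M T m v) = 0"
    by (intro sum.neutral) (metis mult_eq_0_iff set_pmf_iff)
  then show False
    using assms by simp
qed

lemma not_reaches_as_if_absorbing:
  assumes "u \<notin> T" and "M u = return_pmf u"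
  shows "\<not> reaches_as M T u"
proof
  have "reach_within M T n u = 0" for n
    by (induction n) (simp_all add: assms pmf_return indicator_def)
  then have "(\<lambda>n. reach_within M T n u) \<longlonglongrightarrow> 0"
    by simp
  moreover assume "reaches_as M T u"
  ultimately show False
    unfolding reaches_as_def using LIMSEQ_unique by fastforce
qed

lemma couplings_set_fst: "\<omega> \<in> couplings \<mu> \<nu> \<Longrightarrow> set_pmf \<mu> = fst ` set_pmf \<omega>"
  by (force simp: couplings_def)

lemma couplings_set_snd: "\<omega> \<in> couplings \<mu> \<nu> \<Longrightarrow> set_pmf \<nu> = snd ` set_pmf \<omega>"
  by (force simp: couplings_def)

lemma diagonal_coupling: "map_pmf (\<lambda>a. (a, a)) \<mu> \<in> couplings \<mu> \<mu>"
  by (simp add: couplings_def pmf.map_comp o_def)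

lemma swap_coupling: "\<omega> \<in> couplings \<mu> \<nu> \<Longrightarrow> map_pmf prod.swap \<omega> \<in> couplings \<nu> \<mu>"
  by (auto simp: couplings_def pmf.map_comp o_def)

text \<open>Gluing: draw (a, b) from the first coupling, then c from the second one conditioned
  on its first component being b.\<close>
lemma couplings_relcomp:
  assumes \<omega>1: "\<omega>1 \<in> couplings \<mu> \<nu>" and \<omega>2: "\<omega>2 \<in> couplings \<nu> \<rho>"
  shows "\<exists>\<omega>\<in>couplings \<mu> \<rho>. set_pmf \<omega> = set_pmf \<omega>1 O set_pmf \<omega>2"
proof -
  have \<mu>: "\<mu> = map_pmf fst \<omega>1" and \<nu>: "\<nu> = map_pmf snd \<omega>1"
    and \<nu>': "\<nu> = map_pmf fst \<omega>2" and \<rho>: "\<rho> = map_pmf snd \<omega>2"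
    using assms by (auto simp: couplings_def)
  define cond where "cond b = cond_pmf \<omega>2 {bc. fst bc = b}" for b
  define \<omega> where "\<omega> = bind_pmf \<omega>1 (\<lambda>(a, b). map_pmf (\<lambda>(_, c). (a, c)) (cond b))"
  have nonempty: "set_pmf \<omega>2 \<inter> {bc. fst bc = b} \<noteq> {}" if "b \<in> set_pmf \<nu>" for b
    using that by (force simp: \<nu>')
  have set_cond: "set_pmf (cond b) = set_pmf \<omega>2 \<inter> {bc. fst bc = b}" if "b \<in> set_pmf \<nu>" for b
    unfolding cond_def using nonempty[OF that] by simp
  have "set_pmf \<omega> = set_pmf \<omega>1 O set_pmf \<omega>2"
    unfolding \<omega>_def using set_cond by (force simp: \<nu>)
  moreover have "map_pmf fst \<omega> = \<mu>"
    by (simp add: \<omega>_def \<mu> map_bind_pmf pmf.map_comp o_def split_beta map_pmf_def[symmetric])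
  moreover have "map_pmf snd \<omega> = \<rho>"
  proof -
    have "map_pmf snd \<omega> = map_pmf snd (bind_pmf \<nu> cond)"
      by (simp add: \<omega>_def \<nu> map_bind_pmf bind_map_pmf pmf.map_comp o_def split_beta
          map_pmf_def[symmetric])
    also have "bind_pmf \<nu> cond = \<omega>2"
      unfolding \<nu>' bind_map_pmf cond_def
      by (subst bind_cond_pmf_cancel) (auto simp: eq_commute)
    finally show ?thesis
      by (simp add: \<rho>)
  qed
  ultimately show ?thesis
    unfolding couplings_def by blast
qed

lemma diag_pairs_eq_Id [simp]: "diag_pairs = Id"
  by (auto simp: diag_pairs_def)

lemma policy_coupling:
  "is_policy \<tau> lab P \<Longrightarrow> lab s = lab t \<Longrightarrow> P (s, t) \<in> couplings (\<tau> s) (\<tau> t)"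
  by (simp add: is_policy_def diff_label_pairs_def)

lemma ex_policy: "\<exists>P. is_policy \<tau> lab P"
proof
  show "is_policy \<tau> lab (\<lambda>(s, t). if lab s = lab t then pair_pmf (\<tau> s) (\<tau> t) else return_pmf (s, t))"
    by (simp add: is_policy_def diff_label_pairs_def couplings_def map_fst_pair_pmf map_snd_pair_pmf)
qed

lemma robust_bisimilar_same_label:
  assumes "robust_bisimilar \<tau> lab s t"
  shows "lab s = lab t"
proof (rule ccontr)
  assume "lab s \<noteq> lab t"
  obtain P where "is_policy \<tau> lab P" and "reaches_as P diag_pairs (s, t)"
    using assms unfolding robust_bisimilar_def by blast
  moreover from \<open>lab s \<noteq> lab t\<close> have "(s, t) \<notin> diag_pairs"
    by auto
  ultimately show False
    using \<open>lab s \<noteq> lab t\<close> not_reaches_as_if_absorbing[of "(s, t)" diag_pairs P]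
    by (auto simp: is_policy_def diff_label_pairs_def)
qed

definition ranked_coupling_rel ::
  "('s \<Rightarrow> 's pmf) \<Rightarrow> ('s \<Rightarrow> 'l) \<Rightarrow> ('s \<times> 's \<Rightarrow> nat) \<Rightarrow> ('s \<times> 's) set \<Rightarrow> bool" where
  "ranked_coupling_rel \<tau> lab r X \<longleftrightarrow> (\<forall>(s, t)\<in>X. lab s = lab t \<and>
     (s \<noteq> t \<longrightarrow> (\<exists>\<omega>\<in>couplings (\<tau> s) (\<tau> t). set_pmf \<omega> \<subseteq> X \<and> (\<exists>v\<in>set_pmf \<omega>. r v < r (s, t)))))"

lemma ranked_coupling_relI:
  assumes "\<And>s t. (s, t) \<in> X \<Longrightarrow> lab s = lab t"
    and "\<And>s t. (s, t) \<in> X \<Longrightarrow> s \<noteq> t \<Longrightarrow>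
      \<exists>\<omega>\<in>couplings (\<tau> s) (\<tau> t). set_pmf \<omega> \<subseteq> X \<and> (\<exists>v\<in>set_pmf \<omega>. r v < r (s, t))"
  shows "ranked_coupling_rel \<tau> lab r X"
  using assms by (auto simp: ranked_coupling_rel_def)

lemma ranked_coupling_rel_same_label:
  "ranked_coupling_rel \<tau> lab r X \<Longrightarrow> (s, t) \<in> X \<Longrightarrow> lab s = lab t"
  by (auto simp: ranked_coupling_rel_def)

lemma ranked_coupling_rel_progress:
  "ranked_coupling_rel \<tau> lab r X \<Longrightarrow> (s, t) \<in> X \<Longrightarrow> s \<noteq> t \<Longrightarrow>
    \<exists>\<omega>\<in>couplings (\<tau> s) (\<tau> t). set_pmf \<omega> \<subseteq> X \<and> (\<exists>v\<in>set_pmf \<omega>. r v < r (s, t))"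
  by (auto simp: ranked_coupling_rel_def)

lemma robust_bisimilar_if_ranked_coupling_rel:
  fixes \<tau> :: "'s::finite \<Rightarrow> 's pmf"
  assumes ranked: "ranked_coupling_rel \<tau> lab r X" and "(s, t) \<in> X"
  shows "robust_bisimilar \<tau> lab s t"
proof -
  let ?good = "\<lambda>x \<omega>. \<omega> \<in> couplings (\<tau> (fst x)) (\<tau> (snd x)) \<and> set_pmf \<omega> \<subseteq> X \<and>
    (\<exists>v\<in>set_pmf \<omega>. r v < r x)"
  have "\<forall>x\<in>X - Id. \<exists>\<omega>. ?good x \<omega>"
    using ranked_coupling_rel_progress[OF ranked] by force
  then obtain f where f: "\<And>x. x \<in> X - Id \<Longrightarrow> ?good x (f x)"
    by metis
  obtain P0 where P0: "is_policy \<tau> lab P0"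
    using ex_policy by blast
  define P where "P x = (if x \<in> X - Id then f x else P0 x)" for x
  have P_good: "?good x (P x)" if "x \<in> X" and "x \<notin> diag_pairs" for x
    using f that by (simp add: P_def)
  have "is_policy \<tau> lab P"
    unfolding is_policy_def
  proof (intro conjI allI impI)
    fix a b
    assume "(a, b) \<notin> diff_label_pairs lab"
    then show "P (a, b) \<in> couplings (\<tau> a) (\<tau> b)"
      using P_good[of "(a, b)"] P0 by (cases "(a, b) \<in> X - Id") (auto simp: P_def is_policy_def)
  next
    fix a b
    assume diff: "(a, b) \<in> diff_label_pairs lab"
    then have "(a, b) \<notin> X"
      using ranked_coupling_rel_same_label[OF ranked] by (auto simp: diff_label_pairs_def)
    then show "P (a, b) = return_pmf (a, b)"
      using P0 diff by (simp add: P_def is_policy_def)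
  qed
  moreover have "reaches_as P diag_pairs (s, t)"
    by (rule reaches_as_if_rank_decreases[where rank = r, OF _ _ \<open>(s, t) \<in> X\<close>])
      (use P_good in blast)+
  ultimately show ?thesis
    unfolding robust_bisimilar_def by blast
qed

definition diag_distance :: "('s::finite \<Rightarrow> 's pmf) \<Rightarrow> ('s \<Rightarrow> 'l) \<Rightarrow> 's \<times> 's \<Rightarrow> nat" where
  "diag_distance \<tau> lab x = (LEAST n. \<exists>P. is_policy \<tau> lab P \<and> reaches_as P diag_pairs x \<and>
     0 < reach_within P diag_pairs n x)"

lemma diag_distance_le:
  "is_policy \<tau> lab P \<Longrightarrow> reaches_as P diag_pairs x \<Longrightarrow> 0 < reach_within P diag_pairs n x \<Longrightarrow>
    diag_distance \<tau> lab x \<le> n"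
  unfolding diag_distance_def by (rule Least_le) blast

lemma diag_distance_diag: "diag_distance \<tau> lab (a, a) = 0"
proof -
  obtain P where "is_policy \<tau> lab P"
    using ex_policy by blast
  moreover have "reaches_as P diag_pairs (a, a)"
    by (intro reaches_asI[where f = "\<lambda>_. 0"]) (auto simp: reach_within_target)
  ultimately show ?thesis
    using diag_distance_le[of \<tau> lab P "(a, a)" 0] by simp
qed

lemma ex_policy_attaining_diag_distance:
  assumes "robust_bisimilar \<tau> lab s t"
  shows "\<exists>P. is_policy \<tau> lab P \<and> reaches_as P diag_pairs (s, t) \<and>
    0 < reach_within P diag_pairs (diag_distance \<tau> lab (s, t)) (s, t)"
proof -
  obtain P where P: "is_policy \<tau> lab P" "reaches_as P diag_pairs (s, t)"
    using assms unfolding robust_bisimilar_def by blast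
  have "\<forall>\<^sub>F n in sequentially. 0 < reach_within P diag_pairs n (s, t)"
    using P(2) unfolding reaches_as_def by (rule order_tendstoD) simp
  then obtain n where "0 < reach_within P diag_pairs n (s, t)"
    by (auto simp: eventually_sequentially)
  with P have "\<exists>n P. is_policy \<tau> lab P \<and> reaches_as P diag_pairs (s, t) \<and>
      0 < reach_within P diag_pairs n (s, t)"
    by blast
  then show ?thesis
    unfolding diag_distance_def by (rule LeastI_ex)
qed

lemma robust_bisimilar_decreasing_coupling:
  assumes rb: "robust_bisimilar \<tau> lab s t" and "s \<noteq> t"
  shows "\<exists>\<omega>\<in>couplings (\<tau> s) (\<tau> t). set_pmf \<omega> \<subseteq> {(s, t). robust_bisimilar \<tau> lab s t} \<and>
    (\<exists>v\<in>set_pmf \<omega>. diag_distance \<tau> lab v < diag_distance \<tau> lab (s, t))"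
proof -
  obtain P where P: "is_policy \<tau> lab P" "reaches_as P diag_pairs (s, t)"
    and pos: "0 < reach_within P diag_pairs (diag_distance \<tau> lab (s, t)) (s, t)"
    using ex_policy_attaining_diag_distance[OF rb] by blast
  then obtain m where m: "diag_distance \<tau> lab (s, t) = Suc m"
    using \<open>s \<noteq> t\<close> by (cases "diag_distance \<tau> lab (s, t)") auto
  obtain v where v: "v \<in> set_pmf (P (s, t))" "0 < reach_within P diag_pairs m v"
    using ex_successor_reach_within_pos[of "(s, t)" diag_pairs P m] pos \<open>s \<noteq> t\<close> m by auto
  have successors: "reaches_as P diag_pairs w" if "w \<in> set_pmf (P (s, t))" for w
    using reaches_as_successor[OF P(2) _ that] \<open>s \<noteq> t\<close> by simp
  have "P (s, t) \<in> couplings (\<tau> s) (\<tau> t)"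
    using policy_coupling[OF P(1) robust_bisimilar_same_label[OF rb]] .
  moreover have "set_pmf (P (s, t)) \<subseteq> {(s, t). robust_bisimilar \<tau> lab s t}"
    using successors P(1) unfolding robust_bisimilar_def by auto
  moreover have "diag_distance \<tau> lab v < diag_distance \<tau> lab (s, t)"
    using diag_distance_le[OF P(1) successors[OF v(1)] v(2)] m by simp
  ultimately show ?thesis
    using v(1) by blast
qed

lemma ranked_coupling_rel_robust_bisimilar:
  "ranked_coupling_rel \<tau> lab (diag_distance \<tau> lab) {(s, t). robust_bisimilar \<tau> lab s t}"
proof (rule ranked_coupling_relI)
  fix s t
  assume "(s, t) \<in> {(s, t). robust_bisimilar \<tau> lab s t}"
  then show "lab s = lab t"
    using robust_bisimilar_same_label by blast
next
  fix s t
  assume "(s, t) \<in> {(s, t). robust_bisimilar \<tau> lab s t}" and "s \<noteq> t"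
  then show "\<exists>\<omega>\<in>couplings (\<tau> s) (\<tau> t). set_pmf \<omega> \<subseteq> {(s, t). robust_bisimilar \<tau> lab s t} \<and>
      (\<exists>v\<in>set_pmf \<omega>. diag_distance \<tau> lab v < diag_distance \<tau> lab (s, t))"
    by (intro robust_bisimilar_decreasing_coupling) auto
qed

lemma ranked_coupling_rel_Id: "ranked_coupling_rel \<tau> lab r Id"
  by (auto simp: ranked_coupling_rel_def)

lemma ranked_coupling_rel_converse:
  assumes ranked: "ranked_coupling_rel \<tau> lab r X"
  shows "ranked_coupling_rel \<tau> lab (r \<circ> prod.swap) (X\<inverse>)"
proof (rule ranked_coupling_relI)
  fix s t
  assume "(s, t) \<in> X\<inverse>"
  then show "lab s = lab t"
    using ranked_coupling_rel_same_label[OF ranked, of t s] by simp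
next
  fix s t
  assume "(s, t) \<in> X\<inverse>" and "s \<noteq> t"
  then obtain \<omega> v where \<omega>: "\<omega> \<in> couplings (\<tau> t) (\<tau> s)" "set_pmf \<omega> \<subseteq> X"
    and v: "v \<in> set_pmf \<omega>" "r v < r (t, s)"
    using ranked_coupling_rel_progress[OF ranked, of t s] by auto
  have "set_pmf (map_pmf prod.swap \<omega>) \<subseteq> X\<inverse>"
    using \<omega>(2) by auto
  moreover have "prod.swap v \<in> set_pmf (map_pmf prod.swap \<omega>)"
    using v(1) by simp
  moreover have "(r \<circ> prod.swap) (prod.swap v) < (r \<circ> prod.swap) (s, t)"
    using v(2) by simp
  ultimately show "\<exists>\<omega>\<in>couplings (\<tau> s) (\<tau> t). set_pmf \<omega> \<subseteq> X\<inverse> \<and>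
      (\<exists>v\<in>set_pmf \<omega>. (r \<circ> prod.swap) v < (r \<circ> prod.swap) (s, t))"
    using swap_coupling[OF \<omega>(1)] by blast
qed

lemma ranked_coupling_rel_coupling:
  assumes ranked: "ranked_coupling_rel \<tau> lab r X" and "Id \<subseteq> X" and "(s, t) \<in> X"
  shows "\<exists>\<omega>\<in>couplings (\<tau> s) (\<tau> t). set_pmf \<omega> \<subseteq> X"
proof (cases "s = t")
  case True
  have "set_pmf (map_pmf (\<lambda>a. (a, a)) (\<tau> s)) \<subseteq> X"
    using \<open>Id \<subseteq> X\<close> by auto
  then show ?thesis
    using diagonal_coupling[of "\<tau> s"] True by blast
next
  case False
  then show ?thesis
    using ranked \<open>(s, t) \<in> X\<close> by (force simp: ranked_coupling_rel_def)
qed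

text \<open>The rank of a composite pair is read lexicographically, first on the left factor:
  if a and b differ, the left factor makes progress; otherwise the diagonal coupling on
  the left is glued to a progressing coupling on the right.\<close>
lemma ranked_coupling_rel_relcomp_step:
  assumes ranked: "ranked_coupling_rel \<tau> lab r X" and "Id \<subseteq> X" and r_diag: "\<And>a. r (a, a) = 0"
    and r_less: "\<And>x. r x < K" and ab: "(a, b) \<in> X" and bc: "(b, c) \<in> X" and "a \<noteq> c"
  shows "\<exists>\<omega>\<in>couplings (\<tau> a) (\<tau> c). set_pmf \<omega> \<subseteq> X O X \<and>
    (\<exists>a' b' c'. (a', b') \<in> X \<and> (b', c') \<in> X \<and> (a', c') \<in> set_pmf \<omega> \<and>
      r (a', b') * K + r (b', c') < r (a, b) * K + r (b, c))"
proof -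
  obtain \<omega>1 \<omega>2 a' b' c' where \<omega>1: "\<omega>1 \<in> couplings (\<tau> a) (\<tau> b)" "set_pmf \<omega>1 \<subseteq> X"
    and \<omega>2: "\<omega>2 \<in> couplings (\<tau> b) (\<tau> c)" "set_pmf \<omega>2 \<subseteq> X"
    and progress: "(a', b') \<in> set_pmf \<omega>1" "(b', c') \<in> set_pmf \<omega>2"
      "r (a', b') * K + r (b', c') < r (a, b) * K + r (b, c)"
  proof (cases "a = b")
    case True
    with \<open>a \<noteq> c\<close> obtain \<omega>2 b' c' where \<omega>2: "\<omega>2 \<in> couplings (\<tau> b) (\<tau> c)" "set_pmf \<omega>2 \<subseteq> X"
      and bc': "(b', c') \<in> set_pmf \<omega>2" "r (b', c') < r (b, c)"
      using ranked_coupling_rel_progress[OF ranked bc] by auto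
    let ?\<omega>1 = "map_pmf (\<lambda>a. (a, a)) (\<tau> b)"
    have "?\<omega>1 \<in> couplings (\<tau> a) (\<tau> b)"
      using diagonal_coupling True by simp
    moreover have "set_pmf ?\<omega>1 \<subseteq> X"
      using \<open>Id \<subseteq> X\<close> by auto
    moreover have "(b', b') \<in> set_pmf ?\<omega>1"
      using couplings_set_fst[OF \<omega>2(1)] bc'(1) by force
    moreover have "r (b', b') * K + r (b', c') < r (a, b) * K + r (b, c)"
      using True r_diag bc'(2) by simp
    ultimately show ?thesis
      using that \<omega>2 bc'(1) by blast
  next
    case False
    with ab obtain \<omega>1 a' b' where \<omega>1: "\<omega>1 \<in> couplings (\<tau> a) (\<tau> b)" "set_pmf \<omega>1 \<subseteq> X"
      and ab': "(a', b') \<in> set_pmf \<omega>1" "r (a', b') < r (a, b)"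
      using ranked_coupling_rel_progress[OF ranked] by fastforce
    obtain \<omega>2 where \<omega>2: "\<omega>2 \<in> couplings (\<tau> b) (\<tau> c)" "set_pmf \<omega>2 \<subseteq> X"
      using ranked_coupling_rel_coupling[OF ranked \<open>Id \<subseteq> X\<close> bc] by blast
    obtain c' where bc': "(b', c') \<in> set_pmf \<omega>2"
      using couplings_set_snd[OF \<omega>1(1)] couplings_set_fst[OF \<omega>2(1)] ab'(1) by force
    have "r (a', b') * K + r (b', c') < Suc (r (a', b')) * K"
      using r_less[of "(b', c')"] by simp
    also have "\<dots> \<le> r (a, b) * K"
      using ab'(2) by (intro mult_le_mono1) simp
    also have "\<dots> \<le> r (a, b) * K + r (b, c)"
      by simp
    finally show ?thesis
      using that \<omega>1 \<omega>2 ab'(1) bc' by blast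
  qed
  obtain \<omega> where \<omega>: "\<omega> \<in> couplings (\<tau> a) (\<tau> c)" "set_pmf \<omega> = set_pmf \<omega>1 O set_pmf \<omega>2"
    using couplings_relcomp[OF \<omega>1(1) \<omega>2(1)] by blast
  have "set_pmf \<omega> \<subseteq> X O X"
    using \<omega>(2) \<omega>1(2) \<omega>2(2) by (simp add: relcomp_mono)
  moreover have "(a', c') \<in> set_pmf \<omega>"
    using \<omega>(2) progress(1,2) by blast
  moreover have "(a', b') \<in> X" "(b', c') \<in> X"
    using \<omega>1(2) \<omega>2(2) progress(1,2) by blast+
  ultimately show ?thesis
    using \<omega>(1) progress(3) by blast
qed

lemma ranked_coupling_rel_relcomp:
  fixes \<tau> :: "'s::finite \<Rightarrow> 's pmf"
  assumes ranked: "ranked_coupling_rel \<tau> lab r X" and "Id \<subseteq> X" and r_diag: "\<And>a. r (a, a) = 0"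
  shows "\<exists>r'. ranked_coupling_rel \<tau> lab r' (X O X)"
proof -
  define K where "K = Suc (Max (range r))"
  have r_less: "r x < K" for x
    unfolding K_def by (simp add: le_imp_less_Suc)
  define r' where "r' x = (LEAST n. \<exists>b. (fst x, b) \<in> X \<and> (b, snd x) \<in> X \<and>
    n = r (fst x, b) * K + r (b, snd x))" for x
  have r'_le: "r' (a, c) \<le> r (a, b) * K + r (b, c)" if "(a, b) \<in> X" "(b, c) \<in> X" for a b c
    unfolding r'_def using that by (intro Least_le) auto
  have r'_attained: "\<exists>b. (a, b) \<in> X \<and> (b, c) \<in> X \<and> r' (a, c) = r (a, b) * K + r (b, c)"
    if "(a, c) \<in> X O X" for a c
  proof -
    have "\<exists>n b. (a, b) \<in> X \<and> (b, c) \<in> X \<and> n = r (a, b) * K + r (b, c)"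
      using that by blast
    then show ?thesis
      unfolding r'_def fst_conv snd_conv by (rule LeastI_ex)
  qed
  have "ranked_coupling_rel \<tau> lab r' (X O X)"
  proof (rule ranked_coupling_relI)
    fix a c
    assume "(a, c) \<in> X O X"
    then show "lab a = lab c"
      using ranked_coupling_rel_same_label[OF ranked] by (metis relcompE prod.inject)
  next
    fix a c
    assume "(a, c) \<in> X O X" and "a \<noteq> c"
    then obtain b where ab: "(a, b) \<in> X" and bc: "(b, c) \<in> X"
      and r'_eq: "r' (a, c) = r (a, b) * K + r (b, c)"
      using r'_attained by blast
    obtain \<omega> a' b' c' where \<omega>: "\<omega> \<in> couplings (\<tau> a) (\<tau> c)" "set_pmf \<omega> \<subseteq> X O X"
      and progress: "(a', b') \<in> X" "(b', c') \<in> X" "(a', c') \<in> set_pmf \<omega>"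
        "r (a', b') * K + r (b', c') < r (a, b) * K + r (b, c)"
      using ranked_coupling_rel_relcomp_step[OF ranked \<open>Id \<subseteq> X\<close> r_diag r_less ab bc \<open>a \<noteq> c\<close>]
      by blast
    have "r' (a', c') < r' (a, c)"
      using r'_le[OF progress(1,2)] progress(4) r'_eq by linarith
    then show "\<exists>\<omega>\<in>couplings (\<tau> a) (\<tau> c). set_pmf \<omega> \<subseteq> X O X \<and> (\<exists>v\<in>set_pmf \<omega>. r' v < r' (a, c))"
      using \<omega> progress(3) by blast
  qed
  then show ?thesis
    by blast
qed

lemma robust_bisimilar_refl: "robust_bisimilar \<tau> lab s s"
  by (rule robust_bisimilar_if_ranked_coupling_rel[OF ranked_coupling_rel_Id]) simp

lemma robust_bisimilar_sym:
  assumes "robust_bisimilar \<tau> lab s t"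
  shows "robust_bisimilar \<tau> lab t s"
  using assms
  by (intro robust_bisimilar_if_ranked_coupling_rel[OF
        ranked_coupling_rel_converse[OF ranked_coupling_rel_robust_bisimilar]]) simp

lemma robust_bisimilar_trans:
  fixes \<tau> :: "'s::finite \<Rightarrow> 's pmf"
  assumes "robust_bisimilar \<tau> lab s t" and "robust_bisimilar \<tau> lab t u"
  shows "robust_bisimilar \<tau> lab s u"
proof -
  let ?R = "{(s, t). robust_bisimilar \<tau> lab s t}"
  have "Id \<subseteq> ?R"
    using robust_bisimilar_refl by auto
  then obtain r' where "ranked_coupling_rel \<tau> lab r' (?R O ?R)"
    using ranked_coupling_rel_relcomp[OF ranked_coupling_rel_robust_bisimilar _ diag_distance_diag]
    by blast
  moreover have "(s, u) \<in> ?R O ?R"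
    using assms by blast
  ultimately show ?thesis
    by (rule robust_bisimilar_if_ranked_coupling_rel)
qed

lemma equiv_robust_bisimilar: "equiv UNIV {(s, t). robust_bisimilar \<tau> lab s t}"
  by (intro equivI refl_onI symI transI)
    (auto intro: robust_bisimilar_refl robust_bisimilar_sym robust_bisimilar_trans)

lemma prob_bisimulation_robust_bisimilar:
  "prob_bisimulation \<tau> lab {(s, t). robust_bisimilar \<tau> lab s t}"
  unfolding prob_bisimulation_def
proof (intro conjI equiv_robust_bisimilar ballI, clarify)
  let ?R = "{(s, t). robust_bisimilar \<tau> lab s t}"
  fix s t
  assume rb: "robust_bisimilar \<tau> lab s t"
  have "Id \<subseteq> ?R"
    using robust_bisimilar_refl by auto
  then have "\<exists>\<omega>\<in>couplings (\<tau> s) (\<tau> t). set_pmf \<omega> \<subseteq> ?R"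
    using ranked_coupling_rel_coupling[OF ranked_coupling_rel_robust_bisimilar] rb by blast
  then show "lab s = lab t \<and> (\<exists>\<omega>\<in>couplings (\<tau> s) (\<tau> t). set_pmf \<omega> \<subseteq> ?R)"
    using robust_bisimilar_same_label[OF rb] by blast
qed

theorem lemma1:
  fixes \<tau> :: "'s::finite \<Rightarrow> 's pmf" and lab :: "'s \<Rightarrow> 'l"
  assumes "card (range lab) \<ge> 2"
  shows "prob_bisimulation \<tau> lab {(s,t). robust_bisimilar \<tau> lab s t}
    \<and> equiv UNIV {(s,t). robust_bisimilar \<tau> lab s t}
    \<and> {(s,t). robust_bisimilar \<tau> lab s t} \<subseteq> {(s,t). bisimilar \<tau> lab s t}"
proof (intro conjI)
  show "prob_bisimulation \<tau> lab {(s,t). robust_bisimilar \<tau> lab s t}"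
    by (rule prob_bisimulation_robust_bisimilar)
  then show "{(s,t). robust_bisimilar \<tau> lab s t} \<subseteq> {(s,t). bisimilar \<tau> lab s t}"
    unfolding bisimilar_def by blast
qed (rule equiv_robust_bisimilar)

end
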